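(* In the setting described in the context, let $$X=W^{1/2}R^T\big(RWR^TL_{e,s}^\tau RWR^T\big)^{-1}RW^{1/2},\qquad Y=W^{1/2}R^T\big(RWR^T\big)^{-1}RW^{1/2}.$$ Then $\lambda_{\max}(X+Y)=\lambda_{\max}(X)+\lambda_{\max}(Y)$.
   Context: Let $\mathcal G$ be an undirected, connected graph without self-loops, with node set $\{1,\dots,n\}$ ($n\ge2$) and edge set $\mathcal E$, $m=|\mathcal E|$. Give each edge an arbitrary orientation; the incidence matrix $D\in\mathbb R^{n\times m}$ has $D_{il}=1$ if node $i$ is the initial node of edge $l$, $-1$ if it is the terminal node, and $0$ otherwise. Fix a spanning tree $\mathcal G_\tau$ and order the edges so the first $n-1$ are tree edges; write $D=[D_\tau\ D_c]$ with $D_\tau\in\mathbb R^{n\times(n-1)}$. Set $T_\tau^c=(D_\tau^TD_\tau)^{-1}D_\tau^TD_c$ and $R=[I_{n-1}\ T_\tau^c]\in\mathbb R^{(n-1)\times m}$. Let $W=\mathrm{diag}(w_1,\dots,w_m)$, $w_l>0$, and $E=\mathrm{diag}(\epsilon_1,\dots,\epsilon_n)$, $\epsilon_i>0$; $W^{1/2}$ is taken entrywise. Define $L_{e,s}^\tau=D_\tau^TE^{-1}D_\tau$. $\lambda_{\max}$ denotes the largest eigenvalue of a symmetric matrix. *)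

theory Defs
  imports Complex_Main "Jordan_Normal_Form.Char_Poly"
begin

(* Nodes are 0,...,n-1 (the paper's nodes 1..n, shifted by one).
   An oriented edge list es: es!l = (initial node, terminal node) of edge l. *)

definition edge_rel :: "(nat \<times> nat) list \<Rightarrow> (nat \<times> nat) set" where
  "edge_rel F = {(a,b). (a,b) \<in> set F \<or> (b,a) \<in> set F}"

definition connected_on :: "nat \<Rightarrow> (nat \<times> nat) list \<Rightarrow> bool" where
  "connected_on n F = (\<forall>i<n. \<forall>j<n. (i,j) \<in> (edge_rel F)\<^sup>*)"

definition valid_graph :: "nat \<Rightarrow> (nat \<times> nat) list \<Rightarrow> bool" where
  "valid_graph n es = ((\<forall>(a,b)\<in>set es. a < n \<and> b < n \<and> a \<noteq> b)
      \<and> distinct (map (\<lambda>(a,b). {a,b}) es))"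

definition spanning_tree :: "nat \<Rightarrow> (nat \<times> nat) list \<Rightarrow> bool" where
  "spanning_tree n F = (connected_on n F \<and>
      (\<forall>k<length F. \<not> connected_on n (take k F @ drop (Suc k) F)))"

definition incidence_mat :: "nat \<Rightarrow> (nat \<times> nat) list \<Rightarrow> real mat" where
  "incidence_mat n es = mat n (length es) (\<lambda>(i,l).
     if i = fst (es!l) then 1 else if i = snd (es!l) then -1 else 0)"

definition D_tree :: "nat \<Rightarrow> (nat \<times> nat) list \<Rightarrow> real mat" where
  "D_tree n es = mat n (n-1) (\<lambda>(i,l). incidence_mat n es $$ (i,l))"

definition D_cot :: "nat \<Rightarrow> (nat \<times> nat) list \<Rightarrow> real mat" where
  "D_cot n es = mat n (length es - (n-1)) (\<lambda>(i,l). incidence_mat n es $$ (i, l + (n-1)))"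

(* matrix inverse of a square matrix (meaningful when invertible) *)
definition matinv :: "real mat \<Rightarrow> real mat" where
  "matinv A = (SOME B. B \<in> carrier_mat (dim_row A) (dim_row A) \<and>
                       A * B = 1\<^sub>m (dim_row A) \<and> B * A = 1\<^sub>m (dim_row A))"

definition T_tc :: "nat \<Rightarrow> (nat \<times> nat) list \<Rightarrow> real mat" where
  "T_tc n es = matinv ((D_tree n es)\<^sup>T * D_tree n es) * (D_tree n es)\<^sup>T * D_cot n es"

definition R_mat :: "nat \<Rightarrow> (nat \<times> nat) list \<Rightarrow> real mat" where
  "R_mat n es = mat (n-1) (length es) (\<lambda>(i,j).
      if j < n-1 then (if i = j then 1 else 0) else T_tc n es $$ (i, j - (n-1)))"

definition L_es_tau :: "nat \<Rightarrow> (nat \<times> nat) list \<Rightarrow> (nat \<Rightarrow> real) \<Rightarrow> real mat" where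
  "L_es_tau n es \<epsilon> = (D_tree n es)\<^sup>T * matinv (mat_diag n \<epsilon>) * D_tree n es"

definition lambda_max :: "real mat \<Rightarrow> real" where
  "lambda_max A = Max {k. eigenvalue A k}"

end

(* With B = W^(1/2) R^T and M = B^T B = R W R^T, the matrix Y = B M^-1 B^T is the orthogonal
   projection onto the range of B, and X = B (M L M)^-1 B^T has its range there too, so Y Y = Y
   and Y X = X.  Hence an eigenvector of X + Y for an eigenvalue t other than 0 is fixed by Y and
   is an eigenvector of X for t - 1, and conversely.  B is injective because R = [I T], and
   L = D^T E^-1 D is positive definite because each edge of a spanning tree is the only tree edge
   crossing some cut, so the columns of D are independent.  The complex eigenvalues of L M are
   quotients of positive Hermitian forms, so L M has an eigenvalue kappa > 0, and B u is an
   eigenvector of X for 1/kappa whenever u is one of L M for kappa.  Hence lambda_max Y = 1,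
   lambda_max X > 0 and lambda_max (X + Y) = lambda_max X + 1. *)

theory Submission
  imports Defs "Jordan_Normal_Form.Spectral_Radius"
begin

section \<open>Positive definite matrices\<close>

definition inj_mat :: "nat \<Rightarrow> real mat \<Rightarrow> bool" where
  "inj_mat k A \<longleftrightarrow> (\<forall>v\<in>carrier_vec k. A *\<^sub>v v = 0\<^sub>v (dim_row A) \<longrightarrow> v = 0\<^sub>v k)"

definition pos_def_mat :: "nat \<Rightarrow> real mat \<Rightarrow> bool" where
  "pos_def_mat k S \<longleftrightarrow> S \<in> carrier_mat k k \<and> S\<^sup>T = S \<and>
     (\<forall>v\<in>carrier_vec k. v \<noteq> 0\<^sub>v k \<longrightarrow> 0 < v \<bullet> (S *\<^sub>v v))"

lemma nonzero_vec_index: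
  assumes "v \<in> carrier_vec k" "v \<noteq> 0\<^sub>v k"
  obtains i where "i < k" "v $ i \<noteq> 0"
  using assms by (metis eq_vecI carrier_vecD index_zero_vec)

lemma inj_mat_mult:
  assumes A: "A \<in> carrier_mat m n" and B: "B \<in> carrier_mat n k"
    and "inj_mat n A" "inj_mat k B"
  shows "inj_mat k (A * B)"
  unfolding inj_mat_def
proof (intro ballI impI)
  fix v assume v: "v \<in> carrier_vec k" and ABv: "(A * B) *\<^sub>v v = 0\<^sub>v (dim_row (A * B))"
  then have "A *\<^sub>v (B *\<^sub>v v) = 0\<^sub>v (dim_row A)" using assoc_mult_mat_vec[OF A B v] by simp
  then have "B *\<^sub>v v = 0\<^sub>v (dim_row B)" using assms(3) A B v unfolding inj_mat_def by auto
  then show "v = 0\<^sub>v k" using assms(4) v unfolding inj_mat_def by auto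
qed

lemma pos_def_mat_inj:
  assumes "pos_def_mat k S"
  shows "inj_mat k S"
  using assms unfolding pos_def_mat_def inj_mat_def
  by (metis carrier_matD(1) less_irrefl scalar_prod_right_zero)

lemma mat_diag_mult_vec:
  assumes "v \<in> carrier_vec k"
  shows "mat_diag k f *\<^sub>v v = vec k (\<lambda>i. f i * v $ i)"
proof (rule eq_vecI)
  fix i assume "i < dim_vec (vec k (\<lambda>i. f i * v $ i))"
  then have i: "i < k" by simp
  have "(mat_diag k f *\<^sub>v v) $ i = (\<Sum>j\<in>{0..<k}. (if i = j then f j else 0) * v $ j)"
    using assms i by (simp add: mat_diag_def scalar_prod_def)
  also have "\<dots> = (\<Sum>j\<in>{0..<k}. if j = i then f i * v $ i else 0)"
    by (rule sum.cong) auto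
  finally show "(mat_diag k f *\<^sub>v v) $ i = vec k (\<lambda>i. f i * v $ i) $ i"
    using i by simp
qed (simp add: mat_diag_def)

lemma pos_def_mat_diag:
  assumes pos: "\<And>i. i < k \<Longrightarrow> 0 < f i"
  shows "pos_def_mat k (mat_diag k f)"
  unfolding pos_def_mat_def
proof (intro conjI ballI impI)
  show "(mat_diag k f)\<^sup>T = mat_diag k f"
    by (rule eq_matI) (auto simp: mat_diag_def)
  fix v :: "real vec" assume v: "v \<in> carrier_vec k" "v \<noteq> 0\<^sub>v k"
  then obtain i where i: "i < k" "v $ i \<noteq> 0" by (rule nonzero_vec_index)
  have "v \<bullet> (mat_diag k f *\<^sub>v v) = (\<Sum>j<k. f j * (v $ j)\<^sup>2)"
    using v(1) by (simp add: mat_diag_mult_vec scalar_prod_def power2_eq_square lessThan_atLeast0 ac_simps)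
  also have "\<dots> > 0"
  proof (rule sum_pos2[of _ i])
    show "0 < f i * (v $ i)\<^sup>2" using pos[OF i(1)] i(2) by simp
    show "0 \<le> f j * (v $ j)\<^sup>2" if "j \<in> {..<k}" for j using pos[of j] that by simp
  qed (use i in auto)
  finally show "0 < v \<bullet> (mat_diag k f *\<^sub>v v)" .
qed (simp_all add: mat_diag_def)

lemma pos_def_mat_symmetric:
  "pos_def_mat k S \<Longrightarrow> S\<^sup>T = S"
  unfolding pos_def_mat_def by simp

lemma pos_def_mat_nonneg:
  assumes "pos_def_mat k S" "v \<in> carrier_vec k"
  shows "0 \<le> v \<bullet> (S *\<^sub>v v)"
  using assms unfolding pos_def_mat_def
  by (cases "v = 0\<^sub>v k") (auto intro: less_imp_le)

lemma pos_def_mat_congruence: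
  assumes E: "pos_def_mat n E" and D: "D \<in> carrier_mat n k" and inj: "inj_mat k D"
  shows "pos_def_mat k (D\<^sup>T * E * D)"
  unfolding pos_def_mat_def
proof (intro conjI ballI impI)
  have Ec: "E \<in> carrier_mat n n" and Et: "E\<^sup>T = E" using E unfolding pos_def_mat_def by auto
  then show "D\<^sup>T * E * D \<in> carrier_mat k k" using D by simp
  show "(D\<^sup>T * E * D)\<^sup>T = D\<^sup>T * E * D"
    using D Ec Et by (simp add: transpose_mult[of _ k n _ k] transpose_mult[of _ n n _ k]
        assoc_mult_mat[of _ k n _ n _ k])
  fix v :: "real vec" assume v: "v \<in> carrier_vec k" "v \<noteq> 0\<^sub>v k"
  have Dv: "D *\<^sub>v v \<in> carrier_vec n" "D *\<^sub>v v \<noteq> 0\<^sub>v n"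
    using D v inj unfolding inj_mat_def by auto
  have "v \<bullet> ((D\<^sup>T * E * D) *\<^sub>v v) = v \<bullet> (D\<^sup>T *\<^sub>v (E *\<^sub>v (D *\<^sub>v v)))"
    using D Ec v by (simp add: assoc_mult_mat_vec[of _ k n _ n] assoc_mult_mat_vec[of _ k n _ k])
  also have "\<dots> = (E *\<^sub>v (D *\<^sub>v v)) \<bullet> (D *\<^sub>v v)"
    using D Ec v by (subst comm_scalar_prod[of _ k]) (auto simp: transpose_vec_mult_scalar)
  also have "\<dots> = (D *\<^sub>v v) \<bullet> (E *\<^sub>v (D *\<^sub>v v))"
    using Ec Dv by (intro comm_scalar_prod[of _ n]) auto
  also have "\<dots> > 0" using E Dv unfolding pos_def_mat_def by blast
  finally show "0 < v \<bullet> ((D\<^sup>T * E * D) *\<^sub>v v)" .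
qed

lemma pos_def_mat_gram:
  assumes "B \<in> carrier_mat m k" "inj_mat k B"
  shows "pos_def_mat k (B\<^sup>T * B)"
  using pos_def_mat_congruence[OF pos_def_mat_diag[of m "\<lambda>_. 1"] assms] assms(1) by simp

lemma matinv_eqI:
  assumes A: "A \<in> carrier_mat k k" and B: "B \<in> carrier_mat k k"
    and AB: "A * B = 1\<^sub>m k" and BA: "B * A = 1\<^sub>m k"
  shows "matinv A = B"
proof -
  have "matinv A \<in> carrier_mat k k \<and> A * matinv A = 1\<^sub>m k \<and> matinv A * A = 1\<^sub>m k"
    unfolding matinv_def carrier_matD(1)[OF A] by (rule someI_ex) (use B AB BA in blast)
  then have C: "matinv A \<in> carrier_mat k k" "matinv A * A = 1\<^sub>m k" by auto
  have "matinv A = matinv A * (A * B)" using AB C by simp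
  also have "\<dots> = B" using A B C by (simp add: assoc_mult_mat[of _ k k _ k _ k, symmetric])
  finally show ?thesis .
qed

lemma matinv_inj_mat:
  assumes A: "A \<in> carrier_mat k k" and inj: "inj_mat k A"
  shows "matinv A \<in> carrier_mat k k" "A * matinv A = 1\<^sub>m k" "matinv A * A = 1\<^sub>m k"
proof -
  have "det A \<noteq> 0" using det_0_iff_vec_prod_zero_field[OF A] inj A unfolding inj_mat_def by auto
  then obtain B where B: "B \<in> carrier_mat k k" "A * B = 1\<^sub>m k" "B * A = 1\<^sub>m k"
    using det_non_zero_imp_unit[OF A, of "()"] unfolding Units_def ring_mat_def by auto
  then show "matinv A \<in> carrier_mat k k" "A * matinv A = 1\<^sub>m k" "matinv A * A = 1\<^sub>m k"
    using matinv_eqI[OF A B] by auto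
qed

lemma matinv_pos_def_mat:
  assumes "pos_def_mat k S"
  shows "matinv S \<in> carrier_mat k k" "S * matinv S = 1\<^sub>m k" "matinv S * S = 1\<^sub>m k"
  using matinv_inj_mat[OF _ pos_def_mat_inj[OF assms]] assms unfolding pos_def_mat_def by auto

lemma pos_def_mat_sandwich:
  assumes M: "pos_def_mat k M" and L: "pos_def_mat k L"
  shows "pos_def_mat k (M * L * M)"
  using pos_def_mat_congruence[OF L _ pos_def_mat_inj[OF M]] M unfolding pos_def_mat_def by auto

section \<open>Eigenvalues\<close>

lemma scalar_prod_mult_mat_vec_double_sum:
  fixes A :: "'a :: comm_semiring_0 mat"
  assumes "A \<in> carrier_mat k k" "u \<in> carrier_vec k" "v \<in> carrier_vec k"
  shows "u \<bullet> (A *\<^sub>v v) = (\<Sum>i<k. \<Sum>j<k. u $ i * A $$ (i, j) * v $ j)"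
  using assms
  by (simp add: scalar_prod_def sum_distrib_left lessThan_atLeast0 mult.assoc)

lemma hermitian_form_of_real_pos:
  fixes z :: "complex vec"
  assumes S: "pos_def_mat k S" and z: "z \<in> carrier_vec k" "z \<noteq> 0\<^sub>v k"
  shows "\<exists>r>0. conjugate z \<bullet> (map_mat complex_of_real S *\<^sub>v z) = complex_of_real r"
proof -
  define a where "a = map_vec Re z"
  define b where "b = map_vec Im z"
  have Sc: "S \<in> carrier_mat k k" and St: "S\<^sup>T = S" using S unfolding pos_def_mat_def by auto
  have ab: "a \<in> carrier_vec k" "b \<in> carrier_vec k" using z unfolding a_def b_def by auto
  have form: "conjugate z \<bullet> (map_mat complex_of_real S *\<^sub>v z)
      = (\<Sum>i<k. \<Sum>j<k. cnj (z $ i) * complex_of_real (S $$ (i, j)) * z $ j)"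
    using z Sc by (subst scalar_prod_mult_mat_vec_double_sum[of _ k]) (auto intro!: sum.cong)
  have "Re (conjugate z \<bullet> (map_mat complex_of_real S *\<^sub>v z))
      = (\<Sum>i<k. \<Sum>j<k. a $ i * S $$ (i, j) * a $ j + b $ i * S $$ (i, j) * b $ j)"
    unfolding form Re_sum by (intro sum.cong refl) (use z in \<open>simp add: a_def b_def algebra_simps\<close>)
  also have "\<dots> = a \<bullet> (S *\<^sub>v a) + b \<bullet> (S *\<^sub>v b)"
    using Sc ab by (simp add: sum.distrib scalar_prod_mult_mat_vec_double_sum[of _ k])
  finally have Re: "Re (conjugate z \<bullet> (map_mat complex_of_real S *\<^sub>v z))
      = a \<bullet> (S *\<^sub>v a) + b \<bullet> (S *\<^sub>v b)" .
  have "Im (conjugate z \<bullet> (map_mat complex_of_real S *\<^sub>v z))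
      = (\<Sum>i<k. \<Sum>j<k. a $ i * S $$ (i, j) * b $ j - b $ i * S $$ (i, j) * a $ j)"
    unfolding form Im_sum by (intro sum.cong refl) (use z in \<open>simp add: a_def b_def algebra_simps\<close>)
  also have "\<dots> = a \<bullet> (S *\<^sub>v b) - b \<bullet> (S *\<^sub>v a)"
    using Sc ab by (simp add: sum_subtractf scalar_prod_mult_mat_vec_double_sum[of _ k])
  finally have Im: "Im (conjugate z \<bullet> (map_mat complex_of_real S *\<^sub>v z))
      = a \<bullet> (S *\<^sub>v b) - b \<bullet> (S *\<^sub>v a)" .
  have "a \<bullet> (S *\<^sub>v b) = b \<bullet> (S *\<^sub>v a)"
    using transpose_vec_mult_scalar[OF Sc ab(2) ab(1)] St Sc ab by (simp add: comm_scalar_prod[of _ k])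
  moreover have "a \<noteq> 0\<^sub>v k \<or> b \<noteq> 0\<^sub>v k"
  proof (rule ccontr)
    assume "\<not> ?thesis"
    then have "Re (z $ i) = 0 \<and> Im (z $ i) = 0" if "i < k" for i
      using that z(1) unfolding a_def b_def by (metis index_map_vec(1) index_zero_vec(1) carrier_vecD)
    then have "z = 0\<^sub>v k" using z(1) by (intro eq_vecI) (auto simp: complex_eq_iff)
    then show False using z(2) by simp
  qed
  then have "0 < a \<bullet> (S *\<^sub>v a) + b \<bullet> (S *\<^sub>v b)"
    using S ab pos_def_mat_nonneg[OF S] unfolding pos_def_mat_def by (meson add_pos_nonneg add_nonneg_pos)
  ultimately show ?thesis
    using Re Im by (intro exI[of _ "a \<bullet> (S *\<^sub>v a) + b \<bullet> (S *\<^sub>v b)"]) (simp add: complex_eq_iff)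
qed

lemma conjugate_of_real_mult_vec:
  fixes z :: "complex vec"
  assumes "A \<in> carrier_mat m k" "z \<in> carrier_vec k"
  shows "conjugate (map_mat complex_of_real A *\<^sub>v z) = map_mat complex_of_real A *\<^sub>v conjugate z"
  using assms by (intro eq_vecI) (auto simp: scalar_prod_def)

lemma eigenvalue_of_real_iff:
  assumes A: "A \<in> carrier_mat k k"
  shows "eigenvalue (map_mat complex_of_real A) (complex_of_real x) \<longleftrightarrow> eigenvalue A x"
proof -
  have cA: "map_mat complex_of_real A \<in> carrier_mat k k" using A by simp
  show ?thesis
    unfolding eigenvalue_root_char_poly[OF A] eigenvalue_root_char_poly[OF cA]
      of_real_hom.char_poly_hom[OF A] of_real_hom.poly_map_poly by simp
qed

lemma eigenvalue_mult_pos_def_mat: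
  assumes L: "pos_def_mat k L" and M: "pos_def_mat k M" and k: "0 < k"
  obtains \<kappa> where "0 < \<kappa>" "eigenvalue (L * M) \<kappa>"
proof -
  let ?c = "map_mat complex_of_real"
  have Lc: "L \<in> carrier_mat k k" and Mc: "M \<in> carrier_mat k k" and Mt: "M\<^sup>T = M"
    using L M unfolding pos_def_mat_def by auto
  have LM: "L * M \<in> carrier_mat k k" using Lc Mc by simp
  obtain \<mu> where "eigenvalue (?c (L * M)) \<mu>"
    using spectrum_non_empty[of "?c (L * M)" k] LM k unfolding spectrum_def by auto
  then obtain z where z: "z \<in> carrier_vec k" "z \<noteq> 0\<^sub>v k"
    and eig: "?c L *\<^sub>v (?c M *\<^sub>v z) = \<mu> \<cdot>\<^sub>v z"
    using LM Lc Mc unfolding eigenvalue_def eigenvector_def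
    by (auto simp: of_real_hom.mat_hom_mult[OF Lc Mc])
  define y where "y = ?c M *\<^sub>v z"
  have y: "y \<in> carrier_vec k" using Mc z unfolding y_def by simp
  obtain rM where rM: "0 < rM" "conjugate z \<bullet> y = complex_of_real rM"
    using hermitian_form_of_real_pos[OF M z] unfolding y_def by blast
  then have "y \<noteq> 0\<^sub>v k" using z by auto
  then obtain rL where rL: "0 < rL" "conjugate y \<bullet> (?c L *\<^sub>v y) = complex_of_real rL"
    using hermitian_form_of_real_pos[OF L y] by blast
  have "conjugate y \<bullet> z = conjugate z \<bullet> y"
    using transpose_vec_mult_scalar[of "?c M" k k z "conjugate z"] Mc Mt z
    by (simp add: y_def conjugate_of_real_mult_vec map_mat_transpose
        comm_scalar_prod[of _ k])
  then have "complex_of_real rL = \<mu> * complex_of_real rM"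
    using rL rM eig z y by (simp add: y_def[symmetric])
  then have "\<mu> = complex_of_real (rL / rM)" using rM by (simp add: field_simps)
  then have "eigenvalue (L * M) (rL / rM)"
    using \<open>eigenvalue (?c (L * M)) \<mu>\<close> eigenvalue_of_real_iff[OF LM, of "rL / rM"] by simp
  moreover have "0 < rL / rM" using rL rM by simp
  ultimately show ?thesis using that by blast
qed

lemma smult_vec_cancel_right:
  fixes c d :: "'a :: field"
  assumes "w \<in> carrier_vec m" "w \<noteq> 0\<^sub>v m" "c \<cdot>\<^sub>v w = d \<cdot>\<^sub>v w"
  shows "c = d"
proof -
  obtain i where "i < m" "w $ i \<noteq> 0" using assms(1,2) by (rule nonzero_vec_index)
  moreover have "c * w $ i = d * w $ i"
    using arg_cong[OF assms(3), of "\<lambda>v. v $ i"] assms(1) \<open>i < m\<close> by simp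
  ultimately show ?thesis by simp
qed

lemma eigenvalue_idempotent:
  fixes Y :: "'a :: field mat"
  assumes Y: "Y \<in> carrier_mat m m" and idem: "Y * Y = Y" and eig: "eigenvalue Y t"
  shows "t = 0 \<or> t = 1"
proof -
  obtain w where w: "w \<in> carrier_vec m" "w \<noteq> 0\<^sub>v m" "Y *\<^sub>v w = t \<cdot>\<^sub>v w"
    using eig Y unfolding eigenvalue_def eigenvector_def by auto
  have "(t * t) \<cdot>\<^sub>v w = t \<cdot>\<^sub>v w"
    using arg_cong[OF idem, of "\<lambda>A. A *\<^sub>v w"] w Y
    by (simp add: mult_mat_vec smult_smult_assoc[symmetric])
  then have "t * t = t" by (rule smult_vec_cancel_right[OF w(1,2)])
  then show ?thesis by (metis mult_cancel_right1)
qed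

lemma mult_mat_vec_fixed_smult:
  fixes Y :: "'a :: field mat"
  assumes Y: "Y \<in> carrier_mat m m" and w: "w \<in> carrier_vec m"
    and c: "c \<noteq> 0" and fixed: "Y *\<^sub>v (c \<cdot>\<^sub>v w) = c \<cdot>\<^sub>v w"
  shows "Y *\<^sub>v w = w"
proof -
  have "Y *\<^sub>v w = inverse c \<cdot>\<^sub>v (Y *\<^sub>v (c \<cdot>\<^sub>v w))"
    using w Y c by (simp add: mult_mat_vec smult_smult_assoc)
  then show ?thesis using fixed c by (simp add: smult_smult_assoc)
qed

lemma eigenvalue_add_idempotent:
  fixes X Y :: "'a :: field mat"
  assumes X: "X \<in> carrier_mat m m" and Y: "Y \<in> carrier_mat m m"
    and idem: "Y * Y = Y" and absorb: "Y * X = X" and t: "t \<noteq> 0" "t \<noteq> 1"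
  shows "eigenvalue (X + Y) t \<longleftrightarrow> eigenvalue X (t - 1)"
proof -
  note fixed = mult_mat_vec_fixed_smult[OF Y]
  have YX: "Y *\<^sub>v (X *\<^sub>v w) = X *\<^sub>v w" and YY: "Y *\<^sub>v (Y *\<^sub>v w) = Y *\<^sub>v w"
    if "w \<in> carrier_vec m" for w
    using that X Y absorb idem by (metis assoc_mult_mat_vec)+
  show ?thesis
  proof
    assume "eigenvalue (X + Y) t"
    then obtain w where w: "w \<in> carrier_vec m" "w \<noteq> 0\<^sub>v m" "(X + Y) *\<^sub>v w = t \<cdot>\<^sub>v w"
      using X Y unfolding eigenvalue_def eigenvector_def by auto
    then have sum: "X *\<^sub>v w + Y *\<^sub>v w = t \<cdot>\<^sub>v w" using X Y by (simp add: add_mult_distrib_mat_vec)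
    have "Y *\<^sub>v (t \<cdot>\<^sub>v w) = Y *\<^sub>v (X *\<^sub>v w) + Y *\<^sub>v (Y *\<^sub>v w)"
      using X Y w by (simp flip: sum add: mult_add_distrib_mat_vec[of _ m m])
    also have "\<dots> = t \<cdot>\<^sub>v w" using YX YY w sum by simp
    finally have Yw: "Y *\<^sub>v w = w" using fixed w t by blast
    have "X *\<^sub>v w = (t - 1) \<cdot>\<^sub>v w"
    proof (rule eq_vecI)
      fix i assume "i < dim_vec ((t - 1) \<cdot>\<^sub>v w)"
      then have "i < m" using w by simp
      then have "(X *\<^sub>v w) $ i + w $ i = t * w $ i"
        using arg_cong[OF sum, of "\<lambda>v. v $ i"] X w Yw by simp
      then show "(X *\<^sub>v w) $ i = ((t - 1) \<cdot>\<^sub>v w) $ i" using \<open>i < m\<close> w by (simp add: algebra_simps)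
    qed (use X w in simp)
    then show "eigenvalue X (t - 1)" using X w unfolding eigenvalue_def eigenvector_def by auto
  next
    assume "eigenvalue X (t - 1)"
    then obtain w where w: "w \<in> carrier_vec m" "w \<noteq> 0\<^sub>v m" "X *\<^sub>v w = (t - 1) \<cdot>\<^sub>v w"
      using X unfolding eigenvalue_def eigenvector_def by auto
    then have "Y *\<^sub>v w = w" using fixed[of w "t - 1"] YX[of w] t by simp
    then have "(X + Y) *\<^sub>v w = t \<cdot>\<^sub>v w"
      using X Y w by (simp add: add_mult_distrib_mat_vec add_smult_distrib_vec[of "t - 1" 1, simplified])
    then show "eigenvalue (X + Y) t" using X Y w unfolding eigenvalue_def eigenvector_def by auto
  qed
qed

lemma lambda_max_add_idempotent:
  fixes X Y :: "real mat"
  assumes X: "X \<in> carrier_mat m m" and Y: "Y \<in> carrier_mat m m"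
    and idem: "Y * Y = Y" and absorb: "Y * X = X"
    and pos: "eigenvalue X x" "0 < x" and one: "eigenvalue Y 1"
  shows "lambda_max (X + Y) = lambda_max X + lambda_max Y"
proof -
  have fin: "finite {t. eigenvalue A t}" if "A \<in> carrier_mat m m" for A :: "real mat"
    using card_finite_spectrum(1)[OF that] unfolding spectrum_def by simp
  have "lambda_max Y = 1" unfolding lambda_max_def
    by (rule Max_eqI) (use fin[OF Y] one in \<open>auto dest: eigenvalue_idempotent[OF Y idem]\<close>)
  moreover define \<mu> where "\<mu> = lambda_max X"
  have \<mu>: "eigenvalue X \<mu>" "x \<le> \<mu>"
    unfolding \<mu>_def lambda_max_def using Max_in[OF fin[OF X]] Max_ge[OF fin[OF X]] pos by auto
  have "lambda_max (X + Y) = \<mu> + 1" unfolding lambda_max_def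
  proof (rule Max_eqI)
    show "finite {t. eigenvalue (X + Y) t}" using X Y by (intro fin) simp
    show "\<mu> + 1 \<in> {t. eigenvalue (X + Y) t}"
      using eigenvalue_add_idempotent[OF X Y idem absorb, of "\<mu> + 1"] \<mu> pos by simp
    fix t assume "t \<in> {t. eigenvalue (X + Y) t}"
    then have "t = 0 \<or> t = 1 \<or> eigenvalue X (t - 1)"
      using eigenvalue_add_idempotent[OF X Y idem absorb, of t] by auto
    moreover have "eigenvalue X (t - 1) \<Longrightarrow> t - 1 \<le> \<mu>"
      unfolding \<mu>_def lambda_max_def using fin[OF X] by (auto intro: Max_ge)
    ultimately show "t \<le> \<mu> + 1" using \<mu> pos by auto
  qed
  ultimately show ?thesis unfolding \<mu>_def by simp
qed

section \<open>Gram projections\<close>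

lemma gram_projection_mult_self:
  fixes B :: "real mat"
  assumes B: "B \<in> carrier_mat m k" and inj: "inj_mat k B"
  shows "B * matinv (B\<^sup>T * B) * B\<^sup>T * B = B"
proof -
  have M: "pos_def_mat k (B\<^sup>T * B)" by (rule pos_def_mat_gram[OF B inj])
  then have "B * matinv (B\<^sup>T * B) * B\<^sup>T * B = B * (matinv (B\<^sup>T * B) * (B\<^sup>T * B))"
    using B matinv_pos_def_mat(1)[OF M]
    by (simp add: assoc_mult_mat[of _ m k _ m _ k] assoc_mult_mat[of _ m k _ k])
  then show ?thesis using B matinv_pos_def_mat(3)[OF M] by simp
qed

lemma gram_projection_absorb:
  fixes B C :: "real mat"
  assumes B: "B \<in> carrier_mat m k" and inj: "inj_mat k B" and C: "C \<in> carrier_mat k k"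
  shows "B * matinv (B\<^sup>T * B) * B\<^sup>T * (B * C * B\<^sup>T) = B * C * B\<^sup>T"
proof -
  let ?Y = "B * matinv (B\<^sup>T * B) * B\<^sup>T"
  have "?Y \<in> carrier_mat m m"
    using B matinv_pos_def_mat(1)[OF pos_def_mat_gram[OF B inj]] by simp
  then have "?Y * (B * C * B\<^sup>T) = ?Y * B * C * B\<^sup>T"
    using B C by (simp add: assoc_mult_mat[of _ m m _ k] assoc_mult_mat[of _ m k _ k])
  then show ?thesis using gram_projection_mult_self[OF B inj] by simp
qed

lemma eigenvalue_gram_projection:
  fixes B :: "real mat"
  assumes B: "B \<in> carrier_mat m k" and inj: "inj_mat k B" and k: "0 < k"
  shows "eigenvalue (B * matinv (B\<^sup>T * B) * B\<^sup>T) 1"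
proof -
  let ?Y = "B * matinv (B\<^sup>T * B) * B\<^sup>T" and ?e = "unit_vec k 0 :: real vec"
  have Y: "?Y \<in> carrier_mat m m"
    using B matinv_pos_def_mat(1)[OF pos_def_mat_gram[OF B inj]] by simp
  have e: "?e \<in> carrier_vec k" "?e \<noteq> 0\<^sub>v k" using k by (auto simp: unit_vec_def vec_eq_iff)
  have "?Y *\<^sub>v (B *\<^sub>v ?e) = 1 \<cdot>\<^sub>v (B *\<^sub>v ?e)"
    using arg_cong[OF gram_projection_mult_self[OF B inj], of "\<lambda>A. A *\<^sub>v ?e"] Y B e by simp
  moreover have "B *\<^sub>v ?e \<noteq> 0\<^sub>v m" using B e inj unfolding inj_mat_def by auto
  ultimately show ?thesis
    unfolding eigenvalue_def eigenvector_def using Y B e(1) by (intro exI[of _ "B *\<^sub>v ?e"]) auto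
qed

lemma eigenvalue_gram_sandwich_pos:
  fixes B L :: "real mat"
  assumes B: "B \<in> carrier_mat m k" and inj: "inj_mat k B" and L: "pos_def_mat k L" and k: "0 < k"
  defines "M \<equiv> B\<^sup>T * B"
  obtains x where "0 < x" "eigenvalue (B * matinv (M * L * M) * B\<^sup>T) x"
proof -
  have M: "pos_def_mat k M" unfolding M_def by (rule pos_def_mat_gram[OF B inj])
  have Q: "pos_def_mat k (M * L * M)" by (rule pos_def_mat_sandwich[OF M L])
  have Mc: "M \<in> carrier_mat k k" and Lc: "L \<in> carrier_mat k k"
    using M L unfolding pos_def_mat_def by auto
  define Qi where "Qi = matinv (M * L * M)"
  have Qi: "Qi \<in> carrier_mat k k" "Qi * (M * L * M) = 1\<^sub>m k"
    using matinv_pos_def_mat[OF Q] unfolding Qi_def by auto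
  obtain \<kappa> where \<kappa>: "0 < \<kappa>" "eigenvalue (L * M) \<kappa>"
    using eigenvalue_mult_pos_def_mat[OF L M k] .
  then obtain u where u: "u \<in> carrier_vec k" "u \<noteq> 0\<^sub>v k" "(L * M) *\<^sub>v u = \<kappa> \<cdot>\<^sub>v u"
    using Lc Mc unfolding eigenvalue_def eigenvector_def by auto
  have "u = (Qi * (M * L * M)) *\<^sub>v u" using Qi(2) u by simp
  also have "\<dots> = Qi *\<^sub>v (M *\<^sub>v ((L * M) *\<^sub>v u))"
    using Qi(1) Mc Lc u(1) by (simp add: assoc_mult_mat[of _ k k _ k _ k] assoc_mult_mat_vec[of _ k k _ k])
  also have "\<dots> = \<kappa> \<cdot>\<^sub>v (Qi *\<^sub>v (M *\<^sub>v u))"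
    using Qi Mc u by (simp add: mult_mat_vec)
  finally have "inverse \<kappa> \<cdot>\<^sub>v u = (inverse \<kappa> * \<kappa>) \<cdot>\<^sub>v (Qi *\<^sub>v (M *\<^sub>v u))"
    by (metis smult_smult_assoc)
  then have "Qi *\<^sub>v (M *\<^sub>v u) = inverse \<kappa> \<cdot>\<^sub>v u" using \<kappa> by simp
  then have "(B * Qi * B\<^sup>T) *\<^sub>v (B *\<^sub>v u) = inverse \<kappa> \<cdot>\<^sub>v (B *\<^sub>v u)"
    using B Qi(1) u(1) unfolding M_def
    by (simp add: mult_mat_vec assoc_mult_mat_vec[of _ m k _ m] assoc_mult_mat_vec[of _ m k _ k]
        assoc_mult_mat_vec[of _ k m _ k])
  moreover have "B *\<^sub>v u \<noteq> 0\<^sub>v m" using B u inj unfolding inj_mat_def by auto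
  ultimately have "eigenvalue (B * Qi * B\<^sup>T) (inverse \<kappa>)"
    unfolding eigenvalue_def eigenvector_def using B Qi(1) u(1) by (intro exI[of _ "B *\<^sub>v u"]) auto
  then show ?thesis using that[of "inverse \<kappa>"] \<kappa>(1) unfolding Qi_def by simp
qed

lemma lambda_max_gram_add:
  fixes B L :: "real mat"
  assumes B: "B \<in> carrier_mat m k" and inj: "inj_mat k B" and L: "pos_def_mat k L" and k: "0 < k"
  defines "M \<equiv> B\<^sup>T * B"
  defines "X \<equiv> B * matinv (M * L * M) * B\<^sup>T" and "Y \<equiv> B * matinv M * B\<^sup>T"
  shows "lambda_max (X + Y) = lambda_max X + lambda_max Y"
proof -
  have M: "pos_def_mat k M" unfolding M_def by (rule pos_def_mat_gram[OF B inj])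
  have Q: "pos_def_mat k (M * L * M)" by (rule pos_def_mat_sandwich[OF M L])
  have X: "X \<in> carrier_mat m m" and Y: "Y \<in> carrier_mat m m"
    unfolding X_def Y_def using B matinv_pos_def_mat(1)[OF M] matinv_pos_def_mat(1)[OF Q] by auto
  have "Y * Y = Y" "Y * X = X"
    unfolding X_def Y_def M_def
    using gram_projection_absorb[OF B inj] matinv_pos_def_mat(1)[OF M[unfolded M_def]]
      matinv_pos_def_mat(1)[OF Q[unfolded M_def]] by auto
  moreover obtain x where "0 < x" "eigenvalue X x"
    using eigenvalue_gram_sandwich_pos[OF B inj L k] unfolding X_def M_def by blast
  ultimately show ?thesis
    using lambda_max_add_idempotent[OF X Y] eigenvalue_gram_projection[OF B inj k]
    unfolding Y_def M_def by blast
qed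

lemma symmetric_sqrt_factorization:
  fixes R Wh :: "real mat"
  assumes R: "R \<in> carrier_mat p m" and Wh: "Wh \<in> carrier_mat m m" "Wh\<^sup>T = Wh"
  shows "(Wh * R\<^sup>T)\<^sup>T * (Wh * R\<^sup>T) = R * (Wh * Wh) * R\<^sup>T"
    and "C \<in> carrier_mat p p \<Longrightarrow> Wh * R\<^sup>T * C * R * Wh = Wh * R\<^sup>T * C * (Wh * R\<^sup>T)\<^sup>T"
proof -
  have Bt: "(Wh * R\<^sup>T)\<^sup>T = R * Wh" using transpose_mult[OF Wh(1)] R Wh(2) by simp
  show "(Wh * R\<^sup>T)\<^sup>T * (Wh * R\<^sup>T) = R * (Wh * Wh) * R\<^sup>T"
    unfolding Bt using R Wh
    by (simp add: assoc_mult_mat[of _ p m _ m _ p] assoc_mult_mat[of _ p m _ m _ m])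
  show "Wh * R\<^sup>T * C * R * Wh = Wh * R\<^sup>T * C * (Wh * R\<^sup>T)\<^sup>T" if "C \<in> carrier_mat p p"
    using assoc_mult_mat[of "Wh * R\<^sup>T * C" m p R m Wh m] that R Wh unfolding Bt by simp
qed

lemma lambda_max_weighted_add:
  fixes R L :: "real mat"
  assumes R: "R \<in> carrier_mat p m" and inj: "inj_mat p R\<^sup>T"
    and w: "\<And>l. l < m \<Longrightarrow> 0 < w l" and L: "pos_def_mat p L" and p: "0 < p"
  defines "W \<equiv> mat_diag m w" and "Wh \<equiv> mat_diag m (\<lambda>l. sqrt (w l))"
  shows "lambda_max (Wh * R\<^sup>T * matinv (R * W * R\<^sup>T * L * R * W * R\<^sup>T) * R * Wh
      + Wh * R\<^sup>T * matinv (R * W * R\<^sup>T) * R * Wh)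
    = lambda_max (Wh * R\<^sup>T * matinv (R * W * R\<^sup>T * L * R * W * R\<^sup>T) * R * Wh)
      + lambda_max (Wh * R\<^sup>T * matinv (R * W * R\<^sup>T) * R * Wh)"
proof -
  define B where "B = Wh * R\<^sup>T"
  have Wh: "pos_def_mat m Wh" unfolding Wh_def using w by (intro pos_def_mat_diag) simp
  have Whc: "Wh \<in> carrier_mat m m" unfolding Wh_def by simp
  have B: "B \<in> carrier_mat m p" unfolding B_def using R Whc by simp
  have injB: "inj_mat p B"
    unfolding B_def using inj_mat_mult[OF Whc _ pos_def_mat_inj[OF Wh] inj] R by simp
  have WhWh: "Wh * Wh = W"
    unfolding Wh_def W_def mat_diag_diag using w by (auto intro!: eq_matI simp: mat_diag_def less_imp_le)
  note factor = symmetric_sqrt_factorization[OF R Whc pos_def_mat_symmetric[OF Wh], unfolded WhWh]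
  have gram: "B\<^sup>T * B = R * W * R\<^sup>T" unfolding B_def by (rule factor(1))
  have Wc: "W \<in> carrier_mat m m" and Lc: "L \<in> carrier_mat p p"
    using L unfolding W_def pos_def_mat_def by auto
  define A where "A = R * W * R\<^sup>T * L"
  have A: "A \<in> carrier_mat p p"
    unfolding A_def using R Wc Lc by (metis mult_carrier_mat transpose_carrier_mat)
  have "R * W * R\<^sup>T * L * R * W * R\<^sup>T = A * (R * W) * R\<^sup>T"
    unfolding A_def[symmetric] using assoc_mult_mat[OF A R Wc] by simp
  also have "\<dots> = (B\<^sup>T * B) * L * (B\<^sup>T * B)"
    unfolding gram A_def[symmetric] using A R Wc by (simp add: assoc_mult_mat[of A p p _ m _ p])
  finally have MLM: "R * W * R\<^sup>T * L * R * W * R\<^sup>T = (B\<^sup>T * B) * L * (B\<^sup>T * B)" .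
  have M: "pos_def_mat p (B\<^sup>T * B)" by (rule pos_def_mat_gram[OF B injB])
  have Q: "pos_def_mat p ((B\<^sup>T * B) * L * (B\<^sup>T * B))" by (rule pos_def_mat_sandwich[OF M L])
  show ?thesis
    unfolding MLM unfolding gram[symmetric]
    unfolding factor(2)[OF matinv_pos_def_mat(1)[OF M]] factor(2)[OF matinv_pos_def_mat(1)[OF Q]]
    unfolding B_def[symmetric]
    by (rule lambda_max_gram_add[OF B injB L p])
qed

section \<open>Incidence matrices of spanning trees\<close>

lemma nth_in_set_remove_nth:
  assumes "l < length F" "l \<noteq> k"
  shows "F ! l \<in> set (take k F @ drop (Suc k) F)"
proof -
  let ?j = "if l < k then l else l - 1"
  have "(take k F @ drop (Suc k) F) ! ?j = F ! l" "?j < length (take k F @ drop (Suc k) F)"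
    using assms by (auto simp: nth_append min_def)
  then show ?thesis by (metis nth_mem)
qed

lemma spanning_tree_cut:
  assumes tree: "spanning_tree n F" and k: "k < length F"
    and nodes: "\<forall>(a, b)\<in>set F. a < n \<and> b < n"
  obtains T where "T \<subseteq> {..<n}" "fst (F ! k) \<in> T" "snd (F ! k) \<notin> T"
    "\<And>l. l < length F \<Longrightarrow> l \<noteq> k \<Longrightarrow> fst (F ! l) \<in> T \<longleftrightarrow> snd (F ! l) \<in> T"
proof -
  define F' where "F' = take k F @ drop (Suc k) F"
  obtain a b where ab: "F ! k = (a, b)" by (cases "F ! k")
  have ab_n: "a < n" "b < n" using nodes nth_mem[OF k] ab by auto
  have "set F = insert (a, b) (set F')"
    using id_take_nth_drop[OF k] ab unfolding F'_def by (metis list.simps(15) set_append Un_insert_right)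
  then have sub: "edge_rel F \<subseteq> insert (a, b) (insert (b, a) (edge_rel F'))"
    unfolding edge_rel_def by auto
  have "(a, b) \<notin> (edge_rel F')\<^sup>*"
  proof
    assume ab_conn: "(a, b) \<in> (edge_rel F')\<^sup>*"
    moreover have "sym (edge_rel F')" unfolding edge_rel_def sym_def by auto
    ultimately have "(b, a) \<in> (edge_rel F')\<^sup>*" by (meson sym_rtrancl symE)
    then have "edge_rel F \<subseteq> (edge_rel F')\<^sup>*" using sub ab_conn by auto
    then have "(edge_rel F)\<^sup>* \<subseteq> (edge_rel F')\<^sup>*" by (rule rtrancl_subset_rtrancl)
    then have "connected_on n F'" using tree unfolding spanning_tree_def connected_on_def by blast
    then show False using tree k unfolding spanning_tree_def F'_def by blast
  qed
  define T where "T = {i. i < n \<and> (a, i) \<in> (edge_rel F')\<^sup>*}"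
  show ?thesis
  proof (rule that)
    show "T \<subseteq> {..<n}" "fst (F ! k) \<in> T" "snd (F ! k) \<notin> T"
      using ab ab_n \<open>(a, b) \<notin> (edge_rel F')\<^sup>*\<close> by (auto simp: T_def)
    fix l assume l: "l < length F" "l \<noteq> k"
    obtain c d where cd: "F ! l = (c, d)" by (cases "F ! l")
    have "(c, d) \<in> edge_rel F'" "(d, c) \<in> edge_rel F'"
      using nth_in_set_remove_nth[OF l] cd unfolding edge_rel_def F'_def by auto
    moreover have "c < n" "d < n" using nodes nth_mem[OF l(1)] cd by auto
    ultimately show "fst (F ! l) \<in> T \<longleftrightarrow> snd (F ! l) \<in> T"
      unfolding T_def cd by (auto intro: rtrancl_into_rtrancl)
  qed
qed

lemma inj_mat_incidence_mat:
  assumes tree: "spanning_tree n F" and edges: "\<forall>(a, b)\<in>set F. a < n \<and> b < n \<and> a \<noteq> b"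
  shows "inj_mat (length F) (incidence_mat n F)"
  unfolding inj_mat_def
proof (intro ballI impI)
  let ?D = "incidence_mat n F"
  fix x assume x: "x \<in> carrier_vec (length F)" and Dx: "?D *\<^sub>v x = 0\<^sub>v (dim_row ?D)"
  show "x = 0\<^sub>v (length F)"
  proof (rule eq_vecI)
    fix k assume "k < dim_vec (0\<^sub>v (length F) :: real vec)"
    then have k: "k < length F" by simp
    have "\<forall>(a, b)\<in>set F. a < n \<and> b < n" using edges by auto
    then obtain T where T: "T \<subseteq> {..<n}" "fst (F ! k) \<in> T" "snd (F ! k) \<notin> T"
      and cut: "\<And>l. l < length F \<Longrightarrow> l \<noteq> k \<Longrightarrow> fst (F ! l) \<in> T \<longleftrightarrow> snd (F ! l) \<in> T"
      by (rule spanning_tree_cut[OF tree k]) blast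
    have col: "(\<Sum>i\<in>T. ?D $$ (i, l)) = (if l = k then 1 else 0)" if l: "l < length F" for l
    proof -
      have "fst (F ! l) \<noteq> snd (F ! l)" using edges nth_mem[OF l] by auto
      then have "(\<Sum>i\<in>T. ?D $$ (i, l))
          = (\<Sum>i\<in>T. (if i = fst (F ! l) then 1 else 0) - (if i = snd (F ! l) then 1 else 0))"
        using T(1) l by (intro sum.cong) (auto simp: incidence_mat_def)
      also have "\<dots> = (if fst (F ! l) \<in> T then 1 else 0) - (if snd (F ! l) \<in> T then 1 else 0)"
        using finite_subset[OF T(1)] by (simp add: sum_subtractf)
      also have "\<dots> = (if l = k then 1 else 0)" using cut[OF l] T by auto
      finally show ?thesis .
    qed
    have "0 = (\<Sum>i\<in>T. (?D *\<^sub>v x) $ i)"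
      using Dx T(1) by (intro sum.neutral[symmetric]) (auto simp: incidence_mat_def)
    also have "\<dots> = (\<Sum>i\<in>T. \<Sum>l<length F. ?D $$ (i, l) * x $ l)"
      using x T(1) by (intro sum.cong) (auto simp: incidence_mat_def scalar_prod_def lessThan_atLeast0)
    also have "\<dots> = (\<Sum>l<length F. (\<Sum>i\<in>T. ?D $$ (i, l)) * x $ l)"
      by (subst sum.swap) (simp add: sum_distrib_right)
    also have "\<dots> = (\<Sum>l<length F. if l = k then x $ k else 0)"
      by (intro sum.cong) (auto simp: col)
    finally show "x $ k = 0\<^sub>v (length F) $ k" using k by simp
  qed (use x in simp)
qed

lemma D_tree_eq_incidence_mat:
  "n - 1 \<le> length es \<Longrightarrow> D_tree n es = incidence_mat n (take (n - 1) es)"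
  by (rule eq_matI) (auto simp: D_tree_def incidence_mat_def)

lemma pos_def_mat_L_es_tau:
  assumes graph: "valid_graph n es" and len: "n - 1 \<le> length es"
    and tree: "spanning_tree n (take (n - 1) es)" and \<epsilon>: "\<And>i. i < n \<Longrightarrow> 0 < \<epsilon> i"
  shows "pos_def_mat (n - 1) (L_es_tau n es \<epsilon>)"
proof -
  have "\<epsilon> i \<noteq> 0" if "i < n" for i using \<epsilon>[OF that] by simp
  then have "mat_diag n (\<lambda>i. \<epsilon> i * (1 / \<epsilon> i)) = 1\<^sub>m n"
    and "mat_diag n (\<lambda>i. 1 / \<epsilon> i * \<epsilon> i) = 1\<^sub>m n"
    by (auto intro!: eq_matI simp: mat_diag_def)
  then have "matinv (mat_diag n \<epsilon>) = mat_diag n (\<lambda>i. 1 / \<epsilon> i)"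
    by (intro matinv_eqI) simp_all
  moreover have "inj_mat (n - 1) (D_tree n es)"
    using inj_mat_incidence_mat[OF tree] graph len
    unfolding D_tree_eq_incidence_mat[OF len] valid_graph_def by (auto dest: in_set_takeD)
  ultimately show ?thesis
    using pos_def_mat_congruence[OF pos_def_mat_diag[of n "\<lambda>i. 1 / \<epsilon> i"]] \<epsilon>
    unfolding L_es_tau_def by (simp add: D_tree_def)
qed

lemma inj_mat_transpose_R_mat:
  assumes "n - 1 \<le> length es"
  shows "inj_mat (n - 1) (R_mat n es)\<^sup>T"
  unfolding inj_mat_def
proof (intro ballI impI)
  fix u :: "real vec"
  assume u: "u \<in> carrier_vec (n - 1)" and Ru: "(R_mat n es)\<^sup>T *\<^sub>v u = 0\<^sub>v (dim_row (R_mat n es)\<^sup>T)"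
  show "u = 0\<^sub>v (n - 1)"
  proof (rule eq_vecI)
    fix l assume "l < dim_vec (0\<^sub>v (n - 1) :: real vec)"
    then have l: "l < n - 1" by simp
    have "((R_mat n es)\<^sup>T *\<^sub>v u) $ l = u $ l"
      using u l assms by (simp add: R_mat_def scalar_prod_def if_distrib[of "\<lambda>x. x * _"] cong: if_cong)
    then show "u $ l = 0\<^sub>v (n - 1) $ l"
      using arg_cong[OF Ru, of "\<lambda>v. v $ l"] l assms by (simp add: R_mat_def)
  qed (use u in simp)
qed

theorem lemma7:
  fixes n :: nat and es :: "(nat \<times> nat) list" and w \<epsilon> :: "nat \<Rightarrow> real"
  assumes "n \<ge> 2"
    and "valid_graph n es"
    and "length es \<ge> n - 1"
    and "spanning_tree n (take (n-1) es)"
    and "\<And>l. l < length es \<Longrightarrow> w l > 0"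
    and "\<And>i. i < n \<Longrightarrow> \<epsilon> i > 0"
  shows "let m = length es; R = R_mat n es; W = mat_diag m w;
             Wh = mat_diag m (\<lambda>l. sqrt (w l)); L = L_es_tau n es \<epsilon>;
             X = Wh * R\<^sup>T * matinv (R * W * R\<^sup>T * L * R * W * R\<^sup>T) * R * Wh;
             Y = Wh * R\<^sup>T * matinv (R * W * R\<^sup>T) * R * Wh
         in lambda_max (X + Y) = lambda_max X + lambda_max Y"
proof -
  have "inj_mat (n - 1) (R_mat n es)\<^sup>T" by (rule inj_mat_transpose_R_mat[OF assms(3)])
  moreover have "pos_def_mat (n - 1) (L_es_tau n es \<epsilon>)"
    using pos_def_mat_L_es_tau assms(2-4,6) by blast
  moreover have "R_mat n es \<in> carrier_mat (n - 1) (length es)" by (simp add: R_mat_def)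
  ultimately show ?thesis
    unfolding Let_def using lambda_max_weighted_add[of _ "n - 1" "length es" w] assms(1,5) by simp
qed

end
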